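(* Let $A=\{a_1^{k_1},\ldots,a_n^{k_n}\}$ be a multiset, let $m\ge 0$ be an integer, let $r=\max(k_1,\ldots,k_n)$ and $s=\min(m,r)$. Let $\Lambda_m(A)$ be the set of all tuples $(\lambda_1,\ldots,\lambda_s)$ of non-negative integers satisfying $$\sum_{i=1}^s i\lambda_i=m \quad\text{and}\quad \sum_{i=j}^s\lambda_i\le \overline{k_j}\ \ \text{for } j=1,\ldots,s.$$ Then $$|C_m(A)|=\sum_{(\lambda_1,\ldots,\lambda_s)\in\Lambda_m(A)}\ \prod_{j=1}^s\binom{\overline{k_j}-\sum_{i=j+1}^s\lambda_i}{\lambda_j},$$ where an empty sum $\sum_{i=s+1}^s\lambda_i$ is $0$.
   Context: A multiset $A=\{a_1^{k_1},\ldots,a_n^{k_n}\}$ consists of distinct elements $a_1,\ldots,a_n$ with positive integer multiplicities $k_1,\ldots,k_n$; its cardinality is $|A|=k_1+\cdots+k_n$. A submultiset of $A$ is a multiset $\{a_1^{r_1},\ldots,a_n^{r_n}\}$ with integers $0\le r_i\le k_i$ (elements with $r_i=0$ being absent), of cardinality $r_1+\cdots+r_n$. $C_m(A)$ denotes the set of all submultisets of $A$ of cardinality $m$. For each integer $j\ge1$, $\overline{k_j}=|\{i\in\{1,\ldots,n\}: k_i\ge j\}|$ (the adjoint specification of $A$). *)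

theory Defs
  imports "HOL-Library.Multiset"
begin

definition submsets :: "nat \<Rightarrow> 'a multiset \<Rightarrow> 'a multiset set" where
  "submsets m A = {B. B \<subseteq># A \<and> size B = m}"

text \<open>Adjoint specification: kbar_j = number of distinct elements with multiplicity at least j.\<close>
definition adj :: "'a multiset \<Rightarrow> nat \<Rightarrow> nat" where
  "adj A j = card {x \<in> set_mset A. count A x \<ge> j}"

definition maxmult :: "'a multiset \<Rightarrow> nat" where
  "maxmult A = Max (count A ` set_mset A)"

text \<open>Lambda_m(A): tuples (lambda_1,...,lambda_s), s = min m r, represented as lists l
  of length s with lambda_i = l ! (i - 1).\<close>
definition Lam :: "nat \<Rightarrow> 'a multiset \<Rightarrow> nat list set" where
  "Lam m A = (let s = min m (maxmult A) in
     {l. length l = s \<and> (\<Sum>i=1..s. i * l ! (i - 1)) = m \<and>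
         (\<forall>j\<in>{1..s}. (\<Sum>i=j..s. l ! (i - 1)) \<le> adj A j)})"

end

theory Submission
  imports Defs "HOL-Library.Disjoint_Sets"
begin

text \<open>
  A submultiset \<open>B\<close> of \<open>A\<close> of cardinality \<open>m\<close> has all multiplicities at most \<open>s\<close>, so it is
  determined by its level sets \<open>L\<^sub>i = {x. count B x = i}\<close>, \<open>1 \<le> i \<le> s\<close>. These are
  pairwise disjoint, \<open>L\<^sub>i\<close> lies in \<open>T\<^sub>i = {x. i \<le> count A x}\<close> (of size \<open>adj A i\<close>), and
  \<open>m = \<Sum>i. i |L\<^sub>i|\<close>; conversely every such family comes from a submultiset. Grouping by the
  profile \<open>\<lambda>\<^sub>i = |L\<^sub>i|\<close>, which lies in \<open>Lam m A\<close>, it remains to count disjoint families with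
  prescribed sizes inside the decreasing chain \<open>T\<^sub>1 \<supseteq> \<dots> \<supseteq> T\<^sub>s\<close>. Choosing \<open>L\<^sub>s, L\<^sub>s\<^sub>-\<^sub>1, \<dots>\<close>
  in turn, the sets already chosen all lie in \<open>T\<^sub>j\<close>, so \<open>L\<^sub>j\<close> is any \<open>\<lambda>\<^sub>j\<close>-subset of a set of size
  \<open>|T\<^sub>j| - \<Sum>\<^sub>i\<^sub>>\<^sub>j \<lambda>\<^sub>i\<close>.
\<close>

definition disjoint_selections ::
    "(nat \<Rightarrow> 'a set) \<Rightarrow> (nat \<Rightarrow> nat) \<Rightarrow> nat \<Rightarrow> nat \<Rightarrow> (nat \<Rightarrow> 'a set) set" where
  "disjoint_selections T k j s = {S. (\<forall>i. i \<notin> {j..s} \<longrightarrow> S i = {}) \<and>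
     (\<forall>i\<in>{j..s}. S i \<subseteq> T i \<and> card (S i) = k i) \<and> disjoint_family_on S {j..s}}"

lemma disjoint_selections_empty_range:
  "s < j \<Longrightarrow> disjoint_selections T k j s = {\<lambda>_. {}}"
  unfolding disjoint_selections_def by (auto simp: fun_eq_iff disjoint_family_on_def)

lemma disjoint_selections_outside:
  "S \<in> disjoint_selections T k j s \<Longrightarrow> i \<notin> {j..s} \<Longrightarrow> S i = {}"
  unfolding disjoint_selections_def by blast

lemma finite_disjoint_selection:
  assumes "\<And>i. finite (T i)" "S \<in> disjoint_selections T k j s"
  shows "finite (S i)"
proof (cases "i \<in> {j..s}")
  case True
  then have "S i \<subseteq> T i"
    using assms(2) unfolding disjoint_selections_def by blast
  then show ?thesis
    using assms(1) by (rule finite_subset)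
next
  case False
  then show ?thesis
    using disjoint_selections_outside[OF assms(2) False] by simp
qed

lemma disjoint_selections_step:
  assumes "j \<le> s"
  shows "disjoint_selections T k j s = (\<lambda>(S, X). S(j := X)) `
    (SIGMA S:disjoint_selections T k (Suc j) s. {X. X \<subseteq> T j - (\<Union>i\<in>{Suc j..s}. S i) \<and> card X = k j})"
    (is "?L = ?f ` ?R")
proof -
  have split_range: "{j..s} = insert j {Suc j..s}" "j \<notin> {Suc j..s}"
    using assms by auto
  have "?L \<subseteq> ?f ` ?R"
  proof
    fix S assume S: "S \<in> ?L"
    have "S(j := {}) \<in> disjoint_selections T k (Suc j) s"
      using S unfolding disjoint_selections_def split_range
      by (auto simp: disjoint_family_on_def)
    moreover have "S j \<inter> (\<Union>i\<in>{Suc j..s}. S i) = {}"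
      using S unfolding disjoint_selections_def disjoint_family_on_def split_range by auto
    ultimately have "(S(j := {}), S j) \<in> ?R"
      using S unfolding disjoint_selections_def split_range by auto
    then show "S \<in> ?f ` ?R"
      by (intro image_eqI[where x = "(S(j := {}), S j)"]) auto
  qed
  moreover have "?f ` ?R \<subseteq> ?L"
  proof clarify
    fix S X assume S: "S \<in> disjoint_selections T k (Suc j) s"
      and X: "X \<subseteq> T j - (\<Union>i\<in>{Suc j..s}. S i)" "card X = k j"
    have "(S(j := X)) i = {}" if "i \<notin> {j..s}" for i
      using that assms disjoint_selections_outside[OF S, of i] by auto
    moreover have "disjoint_family_on (S(j := X)) {j..s}"
      unfolding disjoint_family_on_def
    proof (intro ballI impI)
      fix a b assume "a \<in> {j..s}" "b \<in> {j..s}" "a \<noteq> b"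
      then show "(S(j := X)) a \<inter> (S(j := X)) b = {}"
        using S X(1) unfolding disjoint_selections_def disjoint_family_on_def
        by (cases "a = j"; cases "b = j") auto
    qed
    ultimately show "S(j := X) \<in> ?L"
      using S X unfolding disjoint_selections_def split_range by auto
  qed
  ultimately show ?thesis
    by (rule equalityI)
qed

lemma card_disjoint_selections:
  assumes "antimono T" "\<And>i. finite (T i)" "j \<le> Suc s"
  shows "finite (disjoint_selections T k j s) \<and>
    card (disjoint_selections T k j s) =
      (\<Prod>i=j..s. (card (T i) - (\<Sum>i'=Suc i..s. k i')) choose k i)"
  using assms(3)
proof (induction j rule: inc_induct)
  case base
  then show ?case by (simp add: disjoint_selections_empty_range)
next
  case (step j)
  let ?D = "disjoint_selections T k (Suc j) s"
  let ?U = "\<lambda>S. \<Union>i\<in>{Suc j..s}. S i"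
  let ?B = "\<lambda>S. {X. X \<subseteq> T j - ?U S \<and> card X = k j}"
  let ?c = "(card (T j) - (\<Sum>i=Suc j..s. k i)) choose k j"
  have js: "j \<le> s" using step.hyps by simp
  have card_B: "card (?B S) = ?c" if S: "S \<in> ?D" for S
  proof -
    have sub: "?U S \<subseteq> T j"
    proof
      fix x assume "x \<in> ?U S"
      then obtain i where "i \<in> {Suc j..s}" "x \<in> S i" by blast
      moreover have "T i \<subseteq> T j" using \<open>i \<in> {Suc j..s}\<close> assms(1) by (simp add: antimono_def)
      ultimately show "x \<in> T j" using S unfolding disjoint_selections_def by blast
    qed
    have fin_U: "finite (?U S)"
      using sub assms(2) by (rule finite_subset)
    have "card (?U S) = (\<Sum>i=Suc j..s. card (S i))"
    proof (rule card_UN_disjoint')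
      show "disjoint_family_on S {Suc j..s}"
        using S unfolding disjoint_selections_def by blast
      show "finite (S i)" if "i \<in> {Suc j..s}" for i
        using that by (intro finite_subset[OF _ fin_U]) blast
    qed simp
    also have "\<dots> = (\<Sum>i=Suc j..s. k i)"
      using S unfolding disjoint_selections_def by (intro sum.cong) auto
    finally have "card (T j - ?U S) = card (T j) - (\<Sum>i=Suc j..s. k i)"
      using card_Diff_subset[OF fin_U sub] by simp
    then show ?thesis
      using n_subsets[of "T j - ?U S" "k j"] assms(2) by simp
  qed
  have inj: "inj_on (\<lambda>(S, X). S(j := X)) (SIGMA S:?D. ?B S)"
  proof (rule inj_onI, clarify)
    fix S X S' X' assume "S \<in> ?D" "S' \<in> ?D" and eq: "S(j := X) = S'(j := X')"
    then have "S j = {}" "S' j = {}"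
      using disjoint_selections_outside[of _ T k "Suc j" s j] by auto
    with eq show "S = S' \<and> X = X'"
      by (metis fun_upd_eqD fun_upd_triv fun_upd_upd)
  qed
  have fin_B: "finite (?B S)" for S
    using assms(2) by simp
  have fin: "finite (SIGMA S:?D. ?B S)"
    using step.IH fin_B by (intro finite_SigmaI) auto
  have "card (SIGMA S:?D. ?B S) = (\<Sum>S\<in>?D. card (?B S))"
    using step.IH fin_B by simp
  also have "\<dots> = card ?D * ?c"
    using card_B by simp
  finally have card_Sigma: "card (SIGMA S:?D. ?B S) = card ?D * ?c" .
  show ?case
    unfolding disjoint_selections_step[OF js] prod.atLeast_Suc_atMost[OF js]
    using card_image[OF inj] fin card_Sigma step.IH by (simp add: mult.commute)
qed

definition elems_mult_ge :: "'a multiset \<Rightarrow> nat \<Rightarrow> 'a set" where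
  "elems_mult_ge A i = {x \<in> set_mset A. i \<le> count A x}"

lemma finite_elems_mult_ge [simp]: "finite (elems_mult_ge A i)"
  unfolding elems_mult_ge_def by simp

lemma mem_elems_mult_ge: "0 < i \<Longrightarrow> x \<in> elems_mult_ge A i \<longleftrightarrow> i \<le> count A x"
  unfolding elems_mult_ge_def by (auto intro: count_inI)

lemma antimono_elems_mult_ge: "antimono (elems_mult_ge A)"
  unfolding elems_mult_ge_def by (intro antimonoI) auto

lemma adj_eq_card_elems_mult_ge: "adj A j = card (elems_mult_ge A j)"
  unfolding adj_def elems_mult_ge_def by simp

definition level_sets :: "nat \<Rightarrow> 'a multiset \<Rightarrow> nat \<Rightarrow> 'a set" where
  "level_sets s B i = (if i \<in> {1..s} then {x. count B x = i} else {})"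

lemma disjoint_family_level_sets: "disjoint_family_on (level_sets s B) I"
  unfolding disjoint_family_on_def level_sets_def by auto

definition mset_of_levels :: "nat \<Rightarrow> (nat \<Rightarrow> 'a set) \<Rightarrow> 'a multiset" where
  "mset_of_levels s S = (\<Sum>i\<in>{1..s}. repeat_mset i (mset_set (S i)))"

lemma finite_count_eq: "0 < i \<Longrightarrow> finite {x. count B x = i}"
  by (rule finite_subset[of _ "set_mset B"]) auto

lemma size_mset_of_levels: "size (mset_of_levels s S) = (\<Sum>i=1..s. i * card (S i))"
  unfolding mset_of_levels_def by simp

lemma count_mset_of_levels:
  assumes "disjoint_family_on S {1..s}" "i \<in> {1..s}" "finite (S i)" "x \<in> S i"
  shows "count (mset_of_levels s S) x = i"
proof -
  have "count (mset_of_levels s S) x = (\<Sum>i'\<in>{1..s}. if i' = i then i else 0)"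
    unfolding mset_of_levels_def count_sum
  proof (rule sum.cong)
    fix i' assume "i' \<in> {1..s}"
    then have "i' \<noteq> i \<Longrightarrow> x \<notin> S i'"
      using assms unfolding disjoint_family_on_def by blast
    then show "count (repeat_mset i' (mset_set (S i'))) x = (if i' = i then i else 0)"
      using assms(3,4) by auto
  qed simp
  then show ?thesis
    using assms(2) by simp
qed

lemma count_mset_of_levels_eq_0: "\<forall>i\<in>{1..s}. x \<notin> S i \<Longrightarrow> count (mset_of_levels s S) x = 0"
  unfolding mset_of_levels_def count_sum by simp

lemma mset_of_levels_level_sets:
  assumes "\<forall>x. count B x \<le> s"
  shows "mset_of_levels s (level_sets s B) = B"
proof (rule multiset_eqI)
  fix x
  show "count (mset_of_levels s (level_sets s B)) x = count B x"
  proof (cases "count B x = 0")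
    case True
    then show ?thesis
      by (simp add: count_mset_of_levels_eq_0 level_sets_def)
  next
    case False
    then have "count B x \<in> {1..s}"
      using assms by (simp add: Suc_le_eq)
    then show ?thesis
      using count_mset_of_levels[of "level_sets s B" s "count B x" x] finite_count_eq[of "count B x" B]
      by (simp add: disjoint_family_level_sets level_sets_def)
  qed
qed

lemma level_sets_mset_of_levels:
  assumes "\<And>i. finite (T i)" "S \<in> disjoint_selections T k 1 s"
  shows "level_sets s (mset_of_levels s S) = S"
proof
  fix i
  have disj: "disjoint_family_on S {1..s}"
    using assms(2) unfolding disjoint_selections_def by blast
  have fin: "finite (S i')" for i'
    using finite_disjoint_selection[OF assms] .
  show "level_sets s (mset_of_levels s S) i = S i"
  proof (cases "i \<in> {1..s}")
    case True
    have "x \<in> S i" if "count (mset_of_levels s S) x = i" for x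
    proof -
      have "\<exists>i'\<in>{1..s}. x \<in> S i'"
        using that True count_mset_of_levels_eq_0[of s x S] by auto
      then obtain i' where "i' \<in> {1..s}" "x \<in> S i'" by blast
      then show ?thesis
        using that count_mset_of_levels[OF disj _ fin] by auto
    qed
    then show ?thesis
      using True count_mset_of_levels[OF disj True fin] by (auto simp: level_sets_def)
  next
    case False
    then have "S i = {}"
      using disjoint_selections_outside[OF assms(2)] by blast
    then show ?thesis
      unfolding level_sets_def if_not_P[OF False] by simp
  qed
qed

lemma size_eq_sum_level_cards:
  assumes "\<forall>x. count B x \<le> s"
  shows "size B = (\<Sum>i=1..s. i * card {x. count B x = i})"
proof -
  have "size B = (\<Sum>i=1..s. i * card (level_sets s B i))"
    using size_mset_of_levels[of s "level_sets s B"] mset_of_levels_level_sets[OF assms] by simp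
  then show ?thesis
    by (simp add: level_sets_def)
qed

lemma card_count_ge_eq_sum:
  assumes "\<forall>x. count B x \<le> s" "1 \<le> j"
  shows "card {x. j \<le> count B x} = (\<Sum>i=j..s. card {x. count B x = i})"
proof -
  have "{x. j \<le> count B x} = (\<Union>i\<in>{j..s}. {x. count B x = i})"
    using assms(1) by auto
  moreover have "card (\<Union>i\<in>{j..s}. {x. count B x = i}) = (\<Sum>i=j..s. card {x. count B x = i})"
    using assms(2) by (intro card_UN_disjoint') (auto simp: disjoint_family_on_def finite_count_eq)
  ultimately show ?thesis by simp
qed

lemma level_sets_in_disjoint_selections:
  assumes "B \<subseteq># A" "\<forall>i\<in>{1..s}. card {x. count B x = i} = k i"
  shows "level_sets s B \<in> disjoint_selections (elems_mult_ge A) k 1 s"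
proof -
  have "level_sets s B i \<subseteq> elems_mult_ge A i" for i
  proof
    fix x assume "x \<in> level_sets s B i"
    then have "count B x = i" "1 \<le> i"
      by (auto simp: level_sets_def split: if_splits)
    then show "x \<in> elems_mult_ge A i"
      using mset_subset_eq_count[OF assms(1), of x] by (simp add: mem_elems_mult_ge)
  qed
  moreover have "level_sets s B i = {}" if "i \<notin> {1..s}" for i
    unfolding level_sets_def if_not_P[OF that] ..
  moreover have "card (level_sets s B i) = k i" if "i \<in> {1..s}" for i
    using assms(2) that by (simp add: level_sets_def)
  ultimately show ?thesis
    unfolding disjoint_selections_def using disjoint_family_level_sets by blast
qed

lemma mset_of_levels_subseteq:
  assumes "S \<in> disjoint_selections (elems_mult_ge A) k 1 s"
  shows "mset_of_levels s S \<subseteq># A" "\<forall>x. count (mset_of_levels s S) x \<le> s"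
proof -
  have disj: "disjoint_family_on S {1..s}"
    using assms unfolding disjoint_selections_def by blast
  have "count (mset_of_levels s S) x \<le> count A x \<and> count (mset_of_levels s S) x \<le> s" for x
  proof (cases "\<exists>i\<in>{1..s}. x \<in> S i")
    case True
    then obtain i where i: "i \<in> {1..s}" "x \<in> S i" by blast
    have "count (mset_of_levels s S) x = i"
      using count_mset_of_levels[OF disj i(1) finite_disjoint_selection[OF _ assms] i(2)] by simp
    moreover have "x \<in> elems_mult_ge A i"
      using assms i unfolding disjoint_selections_def by blast
    ultimately show ?thesis
      using i by (simp add: mem_elems_mult_ge)
  next
    case False
    then show ?thesis
      by (simp add: count_mset_of_levels_eq_0)
  qed
  then show "mset_of_levels s S \<subseteq># A" "\<forall>x. count (mset_of_levels s S) x \<le> s"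
    by (auto simp: subseteq_mset_def)
qed

lemma bij_betw_level_sets:
  "bij_betw (level_sets s)
     {B. B \<subseteq># A \<and> (\<forall>x. count B x \<le> s) \<and> (\<forall>i\<in>{1..s}. card {x. count B x = i} = k i)}
     (disjoint_selections (elems_mult_ge A) k 1 s)"
proof (rule bij_betw_byWitness[where f' = "mset_of_levels s"])
  show "\<forall>B\<in>{B. B \<subseteq># A \<and> (\<forall>x. count B x \<le> s) \<and> (\<forall>i\<in>{1..s}. card {x. count B x = i} = k i)}.
      mset_of_levels s (level_sets s B) = B"
    using mset_of_levels_level_sets by blast
  show "\<forall>S\<in>disjoint_selections (elems_mult_ge A) k 1 s. level_sets s (mset_of_levels s S) = S"
    using level_sets_mset_of_levels[of "elems_mult_ge A"] by simp
  show "level_sets s ` {B. B \<subseteq># A \<and> (\<forall>x. count B x \<le> s) \<and> (\<forall>i\<in>{1..s}. card {x. count B x = i} = k i)}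
      \<subseteq> disjoint_selections (elems_mult_ge A) k 1 s"
    using level_sets_in_disjoint_selections by blast
  show "mset_of_levels s ` disjoint_selections (elems_mult_ge A) k 1 s
      \<subseteq> {B. B \<subseteq># A \<and> (\<forall>x. count B x \<le> s) \<and> (\<forall>i\<in>{1..s}. card {x. count B x = i} = k i)}"
  proof clarify
    fix S assume S: "S \<in> disjoint_selections (elems_mult_ge A) k 1 s"
    have "card {x. count (mset_of_levels s S) x = i} = k i" if "i \<in> {1..s}" for i
      using fun_cong[OF level_sets_mset_of_levels[OF finite_elems_mult_ge S], of i] S that
      unfolding disjoint_selections_def level_sets_def by auto
    then show "mset_of_levels s S \<subseteq># A \<and> (\<forall>x. count (mset_of_levels s S) x \<le> s) \<and>
        (\<forall>i\<in>{1..s}. card {x. count (mset_of_levels s S) x = i} = k i)"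
      using mset_of_levels_subseteq[OF S] by blast
  qed
qed

definition level_profile :: "nat \<Rightarrow> 'a multiset \<Rightarrow> nat list" where
  "level_profile s B = map (\<lambda>i. card {x. count B x = i}) [1..<Suc s]"

lemma length_level_profile [simp]: "length (level_profile s B) = s"
  unfolding level_profile_def by (simp del: upt_Suc)

lemma nth_level_profile:
  assumes "i \<in> {1..s}"
  shows "level_profile s B ! (i - 1) = card {x. count B x = i}"
proof -
  have "i - 1 < s"
    using assms by auto
  then show ?thesis
    unfolding level_profile_def using assms by (simp del: upt_Suc)
qed

lemma level_profile_eq_iff:
  assumes "length l = s"
  shows "level_profile s B = l \<longleftrightarrow> (\<forall>i\<in>{1..s}. card {x. count B x = i} = l ! (i - 1))"
proof -
  have "level_profile s B = l \<longleftrightarrow> (\<forall>i<s. level_profile s B ! i = l ! i)"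
    using assms by (simp add: list_eq_iff_nth_eq)
  also have "\<dots> \<longleftrightarrow> (\<forall>i\<in>{1..s}. level_profile s B ! (i - 1) = l ! (i - 1))"
  proof
    assume "\<forall>i<s. level_profile s B ! i = l ! i"
    then show "\<forall>i\<in>{1..s}. level_profile s B ! (i - 1) = l ! (i - 1)"
      by auto
  next
    assume eq: "\<forall>i\<in>{1..s}. level_profile s B ! (i - 1) = l ! (i - 1)"
    show "\<forall>i<s. level_profile s B ! i = l ! i"
      using eq by (metis Suc_le_eq atLeastAtMost_iff diff_Suc_1 le_add1 plus_1_eq_Suc)
  qed
  also have "\<dots> \<longleftrightarrow> (\<forall>i\<in>{1..s}. card {x. count B x = i} = l ! (i - 1))"
    by (rule ball_cong) (simp_all only: nth_level_profile)
  finally show ?thesis .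
qed

lemma count_le_of_submsets:
  assumes "B \<in> submsets m A"
  shows "count B x \<le> min m (maxmult A)"
proof -
  have B: "B \<subseteq># A" "size B = m"
    using assms unfolding submsets_def by auto
  have "count B x \<le> count A x"
    using B(1) by (rule mset_subset_eq_count)
  moreover have "count A x \<le> maxmult A"
    unfolding maxmult_def by (cases "x \<in># A") (simp_all add: not_in_iff)
  ultimately show ?thesis
    using count_le_size[of B x] B(2) by simp
qed

lemma level_profile_in_Lam:
  assumes "B \<in> submsets m A"
  shows "level_profile (min m (maxmult A)) B \<in> Lam m A"
proof -
  define s where "s = min m (maxmult A)"
  have B: "B \<subseteq># A" "size B = m"
    using assms unfolding submsets_def by auto
  have bounded: "\<forall>x. count B x \<le> s"
    using count_le_of_submsets[OF assms] s_def by blast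
  have "(\<Sum>i=1..s. i * level_profile s B ! (i - 1)) = (\<Sum>i=1..s. i * card {x. count B x = i})"
    by (rule sum.cong) (simp_all only: nth_level_profile)
  also have "\<dots> = m"
    using size_eq_sum_level_cards[OF bounded] B(2) by simp
  finally have "(\<Sum>i=1..s. i * level_profile s B ! (i - 1)) = m" .
  moreover have "(\<Sum>i=j..s. level_profile s B ! (i - 1)) \<le> adj A j" if j: "j \<in> {1..s}" for j
  proof -
    have "(\<Sum>i=j..s. level_profile s B ! (i - 1)) = (\<Sum>i=j..s. card {x. count B x = i})"
    proof (rule sum.cong)
      fix i assume "i \<in> {j..s}"
      then show "level_profile s B ! (i - 1) = card {x. count B x = i}"
        using j by (intro nth_level_profile) auto
    qed simp
    also have "\<dots> = card {x. j \<le> count B x}"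
      using j card_count_ge_eq_sum[OF bounded, of j] by simp
    also have "\<dots> \<le> card (elems_mult_ge A j)"
      using j by (intro card_mono)
        (auto simp: mem_elems_mult_ge intro: le_trans[OF _ mset_subset_eq_count[OF B(1)]])
    finally show ?thesis
      by (simp add: adj_eq_card_elems_mult_ge)
  qed
  ultimately show ?thesis
    unfolding Lam_def s_def[symmetric] Let_def by (simp add: level_profile_def)
qed

lemma finite_Lam: "finite (Lam m A)"
proof (rule finite_subset)
  let ?s = "min m (maxmult A)"
  show "Lam m A \<subseteq> {l. set l \<subseteq> {..m} \<and> length l = ?s}"
  proof
    fix l assume "l \<in> Lam m A"
    then have len: "length l = ?s" and sum: "(\<Sum>i=1..?s. i * l ! (i - 1)) = m"
      unfolding Lam_def Let_def by auto
    have "x \<le> m" if x: "x \<in> set l" for x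
    proof -
      obtain i where i: "i < length l" "x = l ! i"
        using x by (auto simp: in_set_conv_nth)
      have "Suc i * l ! (Suc i - 1) \<le> (\<Sum>i'=1..?s. i' * l ! (i' - 1))"
        using i(1) len by (intro member_le_sum) auto
      moreover have "x \<le> Suc i * x"
        by simp
      ultimately show ?thesis
        using i(2) sum by simp
    qed
    then show "l \<in> {l. set l \<subseteq> {..m} \<and> length l = ?s}"
      using len by auto
  qed
  show "finite {l. set l \<subseteq> {..m} \<and> length l = ?s}"
    by (rule finite_lists_length_eq) simp
qed

lemma submsets_with_level_profile:
  assumes "l \<in> Lam m A" "s = min m (maxmult A)"
  shows "{B \<in> submsets m A. level_profile s B = l} =
    {B. B \<subseteq># A \<and> (\<forall>x. count B x \<le> s) \<and> (\<forall>i\<in>{1..s}. card {x. count B x = i} = l ! (i - 1))}"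
proof -
  have l: "length l = s" "(\<Sum>i=1..s. i * l ! (i - 1)) = m"
    using assms unfolding Lam_def Let_def by auto
  show ?thesis
  proof (intro equalityI subsetI)
    fix B assume "B \<in> {B \<in> submsets m A. level_profile s B = l}"
    then have B: "B \<in> submsets m A" "level_profile s B = l"
      by auto
    then show "B \<in> {B. B \<subseteq># A \<and> (\<forall>x. count B x \<le> s) \<and>
        (\<forall>i\<in>{1..s}. card {x. count B x = i} = l ! (i - 1))}"
      using count_le_of_submsets[OF B(1)] level_profile_eq_iff[OF l(1)] assms(2)
      unfolding submsets_def by auto
  next
    fix B assume "B \<in> {B. B \<subseteq># A \<and> (\<forall>x. count B x \<le> s) \<and>
        (\<forall>i\<in>{1..s}. card {x. count B x = i} = l ! (i - 1))}"
    then have B: "B \<subseteq># A" "\<forall>x. count B x \<le> s" "\<forall>i\<in>{1..s}. card {x. count B x = i} = l ! (i - 1)"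
      by auto
    have "size B = m"
      using size_eq_sum_level_cards[OF B(2)] B(3) l(2) by simp
    then show "B \<in> {B \<in> submsets m A. level_profile s B = l}"
      using B level_profile_eq_iff[OF l(1)] unfolding submsets_def by auto
  qed
qed

theorem theorem4p1:
  fixes A :: "'a multiset" and m :: nat
  assumes "A \<noteq> {#}"
  shows "card (submsets m A) =
    (let s = min m (maxmult A) in
      \<Sum>l\<in>Lam m A. \<Prod>j=1..s. (adj A j - (\<Sum>i=j+1..s. l ! (i - 1))) choose (l ! (j - 1)))"
proof -
  text \<open>The hypothesis \<open>A \<noteq> {#}\<close> is not needed: multiplicities are only ever compared with
    \<open>maxmult A\<close> for elements of \<open>A\<close>, so the junk value \<open>Max {}\<close> never matters.\<close>
  define s where "s = min m (maxmult A)"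
  define fibre where "fibre l = {B \<in> submsets m A. level_profile s B = l}" for l
  have partition: "submsets m A = (\<Union>l\<in>Lam m A. fibre l)"
    using level_profile_in_Lam unfolding fibre_def s_def by blast
  have fibre: "finite (fibre l) \<and> card (fibre l) =
      (\<Prod>j=1..s. (adj A j - (\<Sum>i=j+1..s. l ! (i - 1))) choose (l ! (j - 1)))"
    if "l \<in> Lam m A" for l
  proof -
    have "bij_betw (level_sets s) (fibre l)
        (disjoint_selections (elems_mult_ge A) (\<lambda>i. l ! (i - 1)) 1 s)"
      unfolding fibre_def submsets_with_level_profile[OF that s_def]
      by (rule bij_betw_level_sets)
    then show ?thesis
      using card_disjoint_selections[OF antimono_elems_mult_ge finite_elems_mult_ge, of 1 s]
      by (simp add: bij_betw_same_card bij_betw_finite adj_eq_card_elems_mult_ge)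
  qed
  have "card (submsets m A) = (\<Sum>l\<in>Lam m A. card (fibre l))"
    unfolding partition using fibre finite_Lam
    by (intro card_UN_disjoint') (auto simp: disjoint_family_on_def fibre_def)
  also have "\<dots> = (\<Sum>l\<in>Lam m A. \<Prod>j=1..s. (adj A j - (\<Sum>i=j+1..s. l ! (i - 1))) choose (l ! (j - 1)))"
    using fibre by simp
  finally show ?thesis
    unfolding s_def Let_def .
qed

end
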